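(* Let $C>0$ and $\beta_1>1/\sqrt2$ be constants, and suppose that $$-4\sum_{n=1}^\infty\log\big(1-e^{-2n\beta^2}\big)<\frac{C}{\beta^2}$$ holds for $\beta=\beta_1$. Then it holds for all $\beta\ge\beta_1$. *)

theory Defs
  imports "HOL-Analysis.Analysis"
begin

end

theory Submission
  imports Defs
begin

text \<open>Write \<open>x = \<beta>\<^sup>2\<close> and \<open>F x = - \<Sum>n\<ge>1. ln (1 - exp (-2 n x))\<close>; the claim is that
  \<open>x * F x\<close> does not increase for \<open>x \<ge> 1/2\<close>. This holds termwise: with \<open>u = exp (- c t)\<close>, the
  derivative of \<open>t * - ln (1 - exp (- c t))\<close> is \<open>- ln (1 - u) - c t u / (1 - u)\<close>, which is
  non-positive as soon as \<open>c t \<ge> 1\<close> because \<open>- ln (1 - u) \<le> u / (1 - u)\<close>.\<close>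

text \<open>\<open>minus_ln_euler t = - ln \<phi>(exp (-2 t))\<close> for Euler's function \<open>\<phi>(q) = \<Prod>n\<ge>1. (1 - q\<^sup>n)\<close>.\<close>

definition minus_ln_euler :: "real \<Rightarrow> real" where
  "minus_ln_euler t = (\<Sum>n. - ln (1 - exp (- 2 * real (Suc n) * t)))"

lemma minus_ln_one_minus_le:
  fixes u :: real
  assumes "0 \<le> u" "u < 1"
  shows "- ln (1 - u) \<le> u / (1 - u)"
proof -
  have "ln (1 / (1 - u)) \<le> 1 / (1 - u) - 1"
    using assms by (intro ln_le_minus_one) auto
  moreover have "ln (1 / (1 - u)) = - ln (1 - u)"
    using assms by (simp add: ln_div)
  moreover have "1 / (1 - u) - 1 = u / (1 - u)"
    using assms by (simp add: field_simps)
  ultimately show ?thesis by simp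
qed

lemma summable_minus_ln_one_minus_power:
  fixes q :: real
  assumes "0 \<le> q" "q < 1"
  shows "summable (\<lambda>n. - ln (1 - q ^ Suc n))"
proof (rule summable_comparison_test)
  show "summable (\<lambda>n. q ^ Suc n / (1 - q))"
    using assms by (intro summable_divide summable_Suc_iff[THEN iffD2] summable_geometric) simp
  show "\<exists>N. \<forall>n\<ge>N. norm (- ln (1 - q ^ Suc n)) \<le> q ^ Suc n / (1 - q)"
  proof (intro exI allI impI)
    fix n :: nat
    have u0: "0 \<le> q ^ Suc n" and uq: "q ^ Suc n \<le> q"
      using assms by (simp_all add: mult_left_le power_le_one)
    then have u1: "q ^ Suc n < 1" using assms by linarith
    have "- ln (1 - q ^ Suc n) \<le> q ^ Suc n / (1 - q ^ Suc n)"
      using u0 u1 by (rule minus_ln_one_minus_le)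
    also have "\<dots> \<le> q ^ Suc n / (1 - q)"
      using u0 uq assms by (intro divide_left_mono) auto
    finally show "norm (- ln (1 - q ^ Suc n)) \<le> q ^ Suc n / (1 - q)"
      using u0 u1 by simp
  qed
qed

lemma summable_minus_ln_one_minus_exp:
  fixes t :: real
  assumes "t > 0"
  shows "summable (\<lambda>n. - ln (1 - exp (- 2 * real (Suc n) * t)))"
proof -
  have "exp (- 2 * real (Suc n) * t) = exp (- 2 * t) ^ Suc n" for n
    using exp_of_nat_mult[of "Suc n" "- 2 * t"] by (simp only: mult_ac)
  then show ?thesis
    using summable_minus_ln_one_minus_power[of "exp (- 2 * t)"] assms by simp
qed

lemma times_minus_ln_one_minus_exp_antimono:
  fixes c x y :: real
  assumes "0 < x" "1 \<le> c * x" "x \<le> y"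
  shows "y * - ln (1 - exp (- c * y)) \<le> x * - ln (1 - exp (- c * x))"
proof -
  have "0 < c"
    using assms zero_less_mult_pos2[of c x] by linarith
  then have ct: "1 \<le> c * t" if "x \<le> t" for t
    using assms(2) mult_left_mono[OF that, of c] by linarith
  then have exp_less_one: "exp (- c * t) < 1" if "x \<le> t" for t
    using ct[OF that] by simp
  show ?thesis
  proof (rule DERIV_nonpos_imp_decreasing_open[OF \<open>x \<le> y\<close>])
    fix t assume t: "x < t" "t < y"
    define u where "u = exp (- c * t)"
    have u: "0 < u" "u < 1"
      using exp_less_one[of t] t by (simp_all add: u_def)
    have "((\<lambda>t. t * - ln (1 - exp (- c * t))) has_real_derivative
        - ln (1 - u) + t * - (c * u / (1 - u))) (at t)"
      unfolding u_def
      by (rule derivative_eq_intros refl | use u in \<open>simp add: u_def\<close>)+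
    moreover have "- ln (1 - u) \<le> c * t * (u / (1 - u))"
    proof -
      have "u / (1 - u) \<le> c * t * (u / (1 - u))"
        using mult_right_mono[of 1 "c * t" "u / (1 - u)"] u ct[of t] t by simp
      with minus_ln_one_minus_le[of u] u show ?thesis by simp
    qed
    ultimately show "\<exists>D. ((\<lambda>t. t * - ln (1 - exp (- c * t))) has_real_derivative D) (at t) \<and> D \<le> 0"
      by (force simp: algebra_simps)
  next
    have "\<forall>t\<in>{x..y}. 1 - exp (- c * t) \<noteq> 0"
      using exp_less_one by fastforce
    then show "continuous_on {x..y} (\<lambda>t. t * - ln (1 - exp (- c * t)))"
      by (intro continuous_intros) blast
  qed
qed

lemma minus_ln_euler_eq:
  fixes t :: real
  assumes "t > 0"
  shows "- (\<Sum>n. ln (1 - exp (- 2 * real (Suc n) * t))) = minus_ln_euler t"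
  unfolding minus_ln_euler_def
  using suminf_minus[OF summable_minus_ln_one_minus_exp[OF assms]] by simp

lemma times_minus_ln_euler_antimono:
  fixes x y :: real
  assumes "1/2 \<le> x" "x \<le> y"
  shows "y * minus_ln_euler y \<le> x * minus_ln_euler x"
proof -
  have summable: "summable (\<lambda>n. t * - ln (1 - exp (- 2 * real (Suc n) * t)))" if "t > 0" for t
    using summable_mult[OF summable_minus_ln_one_minus_exp[OF that]] by simp
  have termwise: "y * - ln (1 - exp (- 2 * real (Suc n) * y))
      \<le> x * - ln (1 - exp (- 2 * real (Suc n) * x))" for n
  proof -
    have "1 \<le> 2 * real (Suc n) * x"
      using assms(1) mult_mono[of 2 "2 * real (Suc n)" "1/2" x] by simp
    then show ?thesis
      using times_minus_ln_one_minus_exp_antimono[of x "2 * real (Suc n)" y] assms by simp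
  qed
  have "y * minus_ln_euler y = (\<Sum>n. y * - ln (1 - exp (- 2 * real (Suc n) * y)))"
    unfolding minus_ln_euler_def
    using suminf_mult[OF summable_minus_ln_one_minus_exp, of y y] assms by simp
  also have "\<dots> \<le> (\<Sum>n. x * - ln (1 - exp (- 2 * real (Suc n) * x)))"
    using assms by (intro suminf_le termwise summable) auto
  also have "\<dots> = x * minus_ln_euler x"
    unfolding minus_ln_euler_def
    using suminf_mult[OF summable_minus_ln_one_minus_exp, of x x] assms by simp
  finally show ?thesis .
qed

lemma minus_four_sum_less_divide_iff:
  fixes t C :: real
  assumes "t > 0"
  shows "- 4 * (\<Sum>n. ln (1 - exp (- 2 * real (Suc n) * t))) < C / t
    \<longleftrightarrow> t * (4 * minus_ln_euler t) < C"
proof -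
  have "- 4 * (\<Sum>n. ln (1 - exp (- 2 * real (Suc n) * t))) < C / t
      \<longleftrightarrow> - 4 * (\<Sum>n. ln (1 - exp (- 2 * real (Suc n) * t))) * t < C"
    by (rule pos_less_divide_eq[OF assms])
  also have "- 4 * (\<Sum>n. ln (1 - exp (- 2 * real (Suc n) * t))) * t = t * (4 * minus_ln_euler t)"
    by (simp add: minus_ln_euler_eq[OF assms, symmetric])
  finally show ?thesis .
qed

theorem lemma2p12:
  fixes C \<beta>\<^sub>1 :: real
  assumes "C > 0" and "\<beta>\<^sub>1 > 1 / sqrt 2"
    and "- 4 * (\<Sum>n. ln (1 - exp (- 2 * real (Suc n) * \<beta>\<^sub>1\<^sup>2))) < C / \<beta>\<^sub>1\<^sup>2"
  shows "\<forall>\<beta>\<ge>\<beta>\<^sub>1. - 4 * (\<Sum>n. ln (1 - exp (- 2 * real (Suc n) * \<beta>\<^sup>2))) < C / \<beta>\<^sup>2"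
proof (intro allI impI)
  fix \<beta> :: real
  assume "\<beta> \<ge> \<beta>\<^sub>1"
  have "(1 / sqrt 2)\<^sup>2 < \<beta>\<^sub>1\<^sup>2"
    using assms(2) by (intro power_strict_mono) auto
  then have half_less: "1/2 < \<beta>\<^sub>1\<^sup>2"
    by (simp add: power_divide)
  have "0 < \<beta>\<^sub>1"
    using assms(2) less_trans[of 0 "1 / sqrt 2"] by simp
  then have le: "\<beta>\<^sub>1\<^sup>2 \<le> \<beta>\<^sup>2"
    using \<open>\<beta> \<ge> \<beta>\<^sub>1\<close> by (intro power_mono) auto
  have pos: "0 < \<beta>\<^sub>1\<^sup>2" "0 < \<beta>\<^sup>2"
    using half_less le by linarith+
  have "\<beta>\<^sup>2 * (4 * minus_ln_euler (\<beta>\<^sup>2)) \<le> \<beta>\<^sub>1\<^sup>2 * (4 * minus_ln_euler (\<beta>\<^sub>1\<^sup>2))"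
    using times_minus_ln_euler_antimono[OF _ le] half_less by simp
  also have "\<dots> < C"
    using assms(3) minus_four_sum_less_divide_iff[OF pos(1)] by blast
  finally show "- 4 * (\<Sum>n. ln (1 - exp (- 2 * real (Suc n) * \<beta>\<^sup>2))) < C / \<beta>\<^sup>2"
    using minus_four_sum_less_divide_iff[OF pos(2)] by blast
qed

end
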